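(* For any finite simple graph $X$, the mixed extended threshold GCA map $\mathbf{F}^\updownarrow$ has no periodic orbits of length $\ge 3$.
   Context: Let $X$ be a finite simple graph with vertices $1,\dots,n$; $d(v)$ is the degree of $v$ and $n[v]$ the closed neighborhood of $v$. An extended vertex state is $s_v=(x_v,k_v)\in\{0,1\}\times\{1,\dots,d(v)+1\}$; $\mathcal{S}$ is the product of these sets. Let $\sigma(x[v])=|\{u\in n[v]:x_u=1\}|$. The mixed vertex function maps $(x_v,k_v)$ to $(x_v',k_v')$ with $x_v'=1$ iff $\sigma(x[v])\ge k_v$ (else $0$), and $k_v'=k_v+1$ if $x_v=0$ and $\sigma(x[v])\ge k_v$; $k_v'=k_v-1$ if $x_v=1$ and $\sigma(x[v])<k_v$; $k_v'=k_v$ otherwise. The GCA map $\mathbf{F}^\updownarrow:\mathcal{S}\to\mathcal{S}$ applies this vertex function at all vertices simultaneously. A periodic orbit of length $m$ is a cycle of $m$ distinct states under iteration. *)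

theory Defs
  imports Main
begin

definition simple_graph :: "('a \<Rightarrow> 'a \<Rightarrow> bool) \<Rightarrow> bool" where
  "simple_graph E \<longleftrightarrow> (\<forall>u v. E u v \<longrightarrow> E v u) \<and> (\<forall>v. \<not> E v v)"

definition deg :: "('a \<Rightarrow> 'a \<Rightarrow> bool) \<Rightarrow> 'a \<Rightarrow> nat" where
  "deg E v = card {u. E v u}"

definition closed_nbhd :: "('a \<Rightarrow> 'a \<Rightarrow> bool) \<Rightarrow> 'a \<Rightarrow> 'a set" where
  "closed_nbhd E v = insert v {u. E v u}"

text \<open>Extended states: x_v as bool (True = 1), k_v as nat.\<close>
type_synonym 'a ext_state = "'a \<Rightarrow> bool \<times> nat"

definition ext_states :: "('a \<Rightarrow> 'a \<Rightarrow> bool) \<Rightarrow> 'a ext_state set" where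
  "ext_states E = {s. \<forall>v. 1 \<le> snd (s v) \<and> snd (s v) \<le> deg E v + 1}"

definition sigma :: "('a \<Rightarrow> 'a \<Rightarrow> bool) \<Rightarrow> 'a ext_state \<Rightarrow> 'a \<Rightarrow> nat" where
  "sigma E s v = card {u \<in> closed_nbhd E v. fst (s u)}"

definition mixed_vertex_fun :: "bool \<times> nat \<Rightarrow> nat \<Rightarrow> bool \<times> nat" where
  "mixed_vertex_fun xk \<sigma> =
     (let x = fst xk; k = snd xk in
      (k \<le> \<sigma>,
       if \<not> x \<and> k \<le> \<sigma> then k + 1
       else if x \<and> \<sigma> < k then k - 1
       else k))"

definition GCA_mixed :: "('a \<Rightarrow> 'a \<Rightarrow> bool) \<Rightarrow> 'a ext_state \<Rightarrow> 'a ext_state" where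
  "GCA_mixed E s = (\<lambda>v. mixed_vertex_fun (s v) (sigma E s v))"

definition periodic_orbit :: "('b \<Rightarrow> 'b) \<Rightarrow> 'b \<Rightarrow> nat \<Rightarrow> bool" where
  "periodic_orbit F s m \<longleftrightarrow> 0 < m \<and> (F ^^ m) s = s \<and> inj_on (\<lambda>i. (F ^^ i) s) {..<m}"

end

theory Submission
  imports Defs
begin

text \<open>
  The quantity \<open>c\<^sub>v = k\<^sub>v - x\<^sub>v\<close> is invariant under the map, and in terms of it the new
  activity is \<open>x\<^sub>v' = [c\<^sub>v \<le> h\<^sub>v]\<close>, where \<open>h\<^sub>v\<close> counts the active neighbours of \<open>v\<close>.
  So the activities evolve as a symmetric threshold network with fixed thresholds, and
  Goles' energy \<open>L(x, y) = -2 \<Sum>\<^sub>v y\<^sub>v h\<^sub>v(x) + \<Sum>\<^sub>v (2 c\<^sub>v - 1)(x\<^sub>v + y\<^sub>v)\<close> of two consecutive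
  configurations is non-increasing along orbits, strictly unless the activities repeat after
  two steps. On a periodic orbit the energy is therefore constant, every state recurs after
  two steps, and the period is at most 2.
\<close>

lemma periodic_orbit_less_3_if_lyapunov:
  fixes F :: "'b \<Rightarrow> 'b" and L :: "'b \<Rightarrow> 'b \<Rightarrow> 'c::linorder"
  assumes decreasing: "\<And>a. L (F a) (F (F a)) \<le> L a (F a)"
    and constant_imp_period_2: "\<And>a. L (F a) (F (F a)) = L a (F a) \<Longrightarrow> F (F a) = a"
    and "periodic_orbit F s m"
  shows "m < 3"
proof (rule ccontr)
  assume "\<not> m < 3"
  define x where "x t = (F ^^ t) s" for t
  define energy where "energy t = L (x t) (x (Suc t))" for t
  have x_Suc: "x (Suc t) = F (x t)" for t
    by (simp add: x_def)
  have "x m = x 0" and inj: "inj_on x {..<m}"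
    using \<open>periodic_orbit F s m\<close> by (simp_all add: periodic_orbit_def x_def[abs_def])
  then have "energy m = energy 0"
    by (simp add: energy_def x_Suc)
  moreover have "energy (Suc t) \<le> energy t" for t
    using decreasing by (simp add: energy_def x_Suc)
  then have "energy m \<le> energy 1" and "energy 1 \<le> energy 0"
    using \<open>\<not> m < 3\<close> by (simp_all add: lift_Suc_antimono_le)
  ultimately have "L (F (x 0)) (F (F (x 0))) = L (x 0) (F (x 0))"
    by (simp add: energy_def x_Suc)
  then have "x 2 = x 0"
    using constant_imp_period_2 by (simp add: x_Suc numeral_2_eq_2)
  with inj \<open>\<not> m < 3\<close> show False
    by (auto dest: inj_onD[of _ _ 2 0])
qed

definition active :: "'a ext_state \<Rightarrow> 'a \<Rightarrow> int" where
  "active s v = of_bool (fst (s v))"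

definition threshold :: "'a ext_state \<Rightarrow> 'a \<Rightarrow> int" where
  "threshold s v = int (snd (s v)) - active s v"

definition active_nbrs :: "('a \<Rightarrow> 'a \<Rightarrow> bool) \<Rightarrow> 'a ext_state \<Rightarrow> 'a \<Rightarrow> int" where
  "active_nbrs E s v = (\<Sum>u\<in>UNIV. of_bool (E v u) * active s u)"

lemma sigma_eq_active_plus_active_nbrs:
  fixes E :: "'a::finite \<Rightarrow> 'a \<Rightarrow> bool"
  assumes "simple_graph E"
  shows "int (sigma E s v) = active s v + active_nbrs E s v"
proof -
  let ?N = "{u. E v u \<and> fst (s u)}"
  have "v \<notin> ?N"
    using assms by (simp add: simple_graph_def)
  moreover have "{u \<in> closed_nbhd E v. fst (s u)} = (if fst (s v) then insert v ?N else ?N)"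
    by (auto simp: closed_nbhd_def)
  moreover have "active_nbrs E s v = int (card ?N)"
    unfolding active_nbrs_def active_def of_bool_conj[symmetric]
    by (simp add: sum.If_cases)
  ultimately show ?thesis
    by (simp add: sigma_def active_def card_insert_disjoint del: mem_Collect_eq)
qed

lemma fst_GCA_mixed_iff:
  fixes E :: "'a::finite \<Rightarrow> 'a \<Rightarrow> bool"
  assumes "simple_graph E"
  shows "fst (GCA_mixed E s v) \<longleftrightarrow> threshold s v \<le> active_nbrs E s v"
  using sigma_eq_active_plus_active_nbrs[OF assms, of s v]
  by (auto simp: GCA_mixed_def mixed_vertex_fun_def Let_def threshold_def active_def)

lemma threshold_GCA_mixed [simp]: "threshold (GCA_mixed E s) v = threshold s v"
  by (auto simp: GCA_mixed_def mixed_vertex_fun_def Let_def threshold_def active_def of_nat_diff)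

lemma sum_active_mult_active_nbrs_commute:
  fixes E :: "'a::finite \<Rightarrow> 'a \<Rightarrow> bool"
  assumes "simple_graph E"
  shows "(\<Sum>v\<in>UNIV. active t v * active_nbrs E s v) = (\<Sum>v\<in>UNIV. active s v * active_nbrs E t v)"
proof -
  have "E u v = E v u" for u v
    using assms by (auto simp: simple_graph_def)
  then show ?thesis
    unfolding active_nbrs_def sum_distrib_left
    by (subst sum.swap) (simp add: ac_simps)
qed

definition goles_energy :: "('a \<Rightarrow> 'a \<Rightarrow> bool) \<Rightarrow> 'a ext_state \<Rightarrow> 'a ext_state \<Rightarrow> int" where
  "goles_energy E s t = - 2 * (\<Sum>v\<in>UNIV. active t v * active_nbrs E s v)
      + (\<Sum>v\<in>UNIV. (2 * threshold s v - 1) * (active t v + active s v))"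

lemma goles_energy_step_diff:
  fixes E :: "'a::finite \<Rightarrow> 'a \<Rightarrow> bool"
  assumes "simple_graph E"
  shows "goles_energy E s (GCA_mixed E s) - goles_energy E (GCA_mixed E s) (GCA_mixed E (GCA_mixed E s)) =
    (\<Sum>v\<in>UNIV. (active (GCA_mixed E (GCA_mixed E s)) v - active s v)
      * (2 * active_nbrs E (GCA_mixed E s) v - 2 * threshold (GCA_mixed E s) v + 1))"
  unfolding goles_energy_def sum_active_mult_active_nbrs_commute[OF assms, of "GCA_mixed E s" s]
  by (simp add: sum_subtractf[symmetric] sum.distrib[symmetric] sum_distrib_left algebra_simps)

text \<open>The new activity is 1 exactly when the odd second factor is positive.\<close>

lemma goles_energy_summand_nonneg:
  fixes E :: "'a::finite \<Rightarrow> 'a \<Rightarrow> bool"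
  assumes "simple_graph E"
  shows "0 \<le> (active (GCA_mixed E t) v - active s v) * (2 * active_nbrs E t v - 2 * threshold t v + 1)"
  using fst_GCA_mixed_iff[OF assms, of t v] by (auto simp: active_def)

lemma mult_odd_eq_0_iff: "(d::int) * (2 * a - 2 * b + 1) = 0 \<longleftrightarrow> d = 0"
proof -
  have "2 * a - 2 * b + 1 \<noteq> 0"
    by presburger
  then show ?thesis
    by simp
qed

lemma goles_energy_decreasing:
  fixes E :: "'a::finite \<Rightarrow> 'a \<Rightarrow> bool"
  assumes "simple_graph E"
  shows "goles_energy E (GCA_mixed E s) (GCA_mixed E (GCA_mixed E s)) \<le> goles_energy E s (GCA_mixed E s)"
proof -
  have "0 \<le> goles_energy E s (GCA_mixed E s) - goles_energy E (GCA_mixed E s) (GCA_mixed E (GCA_mixed E s))"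
    unfolding goles_energy_step_diff[OF assms]
    by (intro sum_nonneg goles_energy_summand_nonneg[OF assms])
  then show ?thesis
    by simp
qed

lemma GCA_mixed_period_2_if_goles_energy_constant:
  fixes E :: "'a::finite \<Rightarrow> 'a \<Rightarrow> bool"
  assumes "simple_graph E"
    and "goles_energy E (GCA_mixed E s) (GCA_mixed E (GCA_mixed E s)) = goles_energy E s (GCA_mixed E s)"
  shows "GCA_mixed E (GCA_mixed E s) = s"
proof
  fix v
  let ?s2 = "GCA_mixed E (GCA_mixed E s)"
  let ?summand = "\<lambda>v. (active ?s2 v - active s v)
    * (2 * active_nbrs E (GCA_mixed E s) v - 2 * threshold (GCA_mixed E s) v + 1)"
  have "sum ?summand UNIV = 0"
    using goles_energy_step_diff[OF assms(1), of s] assms(2) by simp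
  moreover have "\<forall>v\<in>UNIV. 0 \<le> ?summand v"
    using goles_energy_summand_nonneg[OF assms(1)] by blast
  ultimately have "?summand v = 0"
    using sum_nonneg_eq_0_iff[of UNIV ?summand] by simp
  then have "active ?s2 v = active s v"
    unfolding mult_odd_eq_0_iff by simp
  moreover have "threshold ?s2 v = threshold s v"
    by simp
  ultimately have "fst (?s2 v) = fst (s v)" and "int (snd (?s2 v)) = int (snd (s v))"
    by (auto simp: threshold_def active_def)
  then show "?s2 v = s v"
    by (simp add: prod_eq_iff)
qed

text \<open>The invariant does not need the range bounds on \<open>k\<^sub>v\<close>, so \<open>s \<in> ext_states E\<close> is unused.\<close>

theorem proposition3p8:
  fixes E :: "'a::finite \<Rightarrow> 'a \<Rightarrow> bool"
    and s :: "'a ext_state" and m :: nat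
  assumes "simple_graph E"
    and "s \<in> ext_states E"
    and "periodic_orbit (GCA_mixed E) s m"
  shows "m < 3"
  using goles_energy_decreasing[OF assms(1)]
    GCA_mixed_period_2_if_goles_energy_constant[OF assms(1)] assms(3)
  by (rule periodic_orbit_less_3_if_lyapunov)

end
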